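(* There exists a two-way optical interference automaton (2OIA) that recognizes the language $L_{bal}=\{w\in\{(,)\}^*\mid \text{the parentheses in } w \text{ are balanced}\}$ in $O(n^3)$ time, where $n$ is the input length.
   Context: A two-way optical interference automaton (2OIA) is a deterministic machine with finite state set $Q$, start state $q_0$, accepting and rejecting states, finite input alphabet $\Sigma$, and tape alphabet $\Gamma=\Sigma\cup\{\text{¢},\$\}$. On input $w=w_1\cdots w_n$ the read-only tape holds ¢$w_1\cdots w_n\$$ in cells $0,1,\dots,n+1$, scanned by a two-way head. For each cell $m$ there is a monochromatic point light source at the point $(m,0)$ of the plane; all sources have the same wavelength $\lambda$ and the same initial amplitude $A_0$, and each source is at any moment either switched off or switched on with initial phase $0$ or $\pi$. A detector is located at a grid point $(j,k)$ with $j,k\in\{0,\tfrac12,1,\tfrac32,\dots,n+1\}$, pointing towards the source array; its field of vision is the cone making angle $\pi/4$ with the vertical line through it, so it sees exactly the sources at $(m,0)$ with $|m-j|\le k$. The resultant wave at the detector is $\sum A_0 r_m^{-1}e^{i(\phi_m+2\pi r_m/\lambda)}$, summed over the switched-on sources it sees, where $r_m$ is the distance from the source to the detector and $\phi_m\in\{0,\pi\}$ the source's phase; the detector outputs $\underline{1}$ if this resultant is nonzero and $\underline{0}$ otherwise. The transition function $\delta:Q\times\Gamma\times\{\underline0,\underline1\}\to Q\times\{\text{left},\text{right},\text{stay}\}\times\{\text{left},\text{right},\text{up},\text{down},\text{stay}\}\times\{\mathrm{toggle}(0),\mathrm{toggle}(\pi),-\}$ maps (state, scanned symbol, detector output) to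 a new state, a move of the head by one cell, a move of the detector by one grid step (of length $1/2$), and an action on the source of the currently scanned cell: $\mathrm{toggle}(\phi)$ switches it on with phase $\phi$ if it is off and switches it off if it is on; $-$ does nothing. Initially all sources are off, the machine is in $q_0$, the head is on cell $0$, and the detector is at a prescribed initial grid position. For a given source, a maximal sequence of toggles at consecutive time steps is called non-transient if its length is odd; there is a constant $k$ such that the machine crashes if it attempts a non-transient toggle sequence on a single source for the $(k+1)$-th time. The machine accepts when it is in an accepting state with detector output $\underline0$. Its running time is the total number of moves made by the head plus the number of moves made by the detector. A 2OIA recognizes a language $L$ if it accepts every input in $L$ and rejects every input not in $L$. *)

theory Defs
  imports Complex_Main
begin

datatype paren = LP | RP

datatype 'a tsym = LEnd | REnd | Sym 'a

datatype hmove = HLeft | HRight | HStay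
datatype dmove = DLeft | DRight | DUp | DDown | DStay
datatype act = Toggle0 | TogglePi | NoAct
datatype src = Off | On0 | OnPi

text \<open>The detector position is stored in half-units: a pair (J,K) of naturals stands
  for the grid point (J/2, K/2).  \<open>kbound\<close> is the constant k bounding the number
  of non-transient toggle sequences per source.\<close>
record 'a oia =
  states :: "nat set"
  start :: nat
  accs :: "nat set"
  rejs :: "nat set"
  trans :: "nat \<Rightarrow> 'a tsym \<Rightarrow> bool \<Rightarrow> nat \<times> hmove \<times> dmove \<times> act"
  wavelength :: real
  amp :: real
  det0 :: "nat \<times> nat"
  kbound :: nat

definition wf_oia :: "'a oia \<Rightarrow> bool" where
  "wf_oia M \<longleftrightarrow> finite (states M) \<and> start M \<in> states M \<and>
     accs M \<subseteq> states M \<and> rejs M \<subseteq> states M \<and> accs M \<inter> rejs M = {} \<and>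
     (\<forall>q\<in>states M. \<forall>s b. fst (trans M q s b) \<in> states M) \<and>
     wavelength M > 0 \<and> amp M > 0"

record config =
  cstate :: nat
  chead :: nat
  cdet :: "nat \<times> nat"
  csrc :: "nat \<Rightarrow> src"

text \<open>Tape contents on input w: cell 0 is the left endmarker, cells 1..n the input,
  cell n+1 the right endmarker.\<close>
definition tape :: "'a list \<Rightarrow> nat \<Rightarrow> 'a tsym" where
  "tape w i = (if i = 0 then LEnd else if i \<le> length w then Sym (w ! (i - 1)) else REnd)"

fun phase :: "src \<Rightarrow> real" where
  "phase Off = 0" | "phase On0 = 0" | "phase OnPi = pi"

text \<open>Sources seen by a detector at (J/2, K/2): those at (m,0), 0 \<le> m \<le> n+1, with |m - J/2| \<le> K/2.\<close>
definition visible :: "nat \<Rightarrow> nat \<times> nat \<Rightarrow> nat set" where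
  "visible n d = {m. m \<le> n + 1 \<and> \<bar>real m - real (fst d) / 2\<bar> \<le> real (snd d) / 2}"

definition srcdist :: "nat \<times> nat \<Rightarrow> nat \<Rightarrow> real" where
  "srcdist d m = sqrt ((real m - real (fst d) / 2)\<^sup>2 + (real (snd d) / 2)\<^sup>2)"

definition resultant :: "'a oia \<Rightarrow> nat \<Rightarrow> nat \<times> nat \<Rightarrow> (nat \<Rightarrow> src) \<Rightarrow> complex" where
  "resultant M n d S =
     (\<Sum>m\<in>{m\<in>visible n d. S m \<noteq> Off}.
        of_real (amp M / srcdist d m) * cis (phase (S m) + 2 * pi * srcdist d m / wavelength M))"

text \<open>Detector output (True = 1).  A switched-on source located exactly at the detector
  (distance 0, infinite amplitude) is regarded as giving output 1.\<close>
definition det_output :: "'a oia \<Rightarrow> nat \<Rightarrow> config \<Rightarrow> bool" where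
  "det_output M n c \<longleftrightarrow>
     (\<exists>m\<in>visible n (cdet c). csrc c m \<noteq> Off \<and> srcdist (cdet c) m = 0) \<or>
     resultant M n (cdet c) (csrc c) \<noteq> 0"

fun toggle :: "act \<Rightarrow> src \<Rightarrow> src" where
  "toggle NoAct s = s"
| "toggle Toggle0 s = (if s = Off then On0 else Off)"
| "toggle TogglePi s = (if s = Off then OnPi else Off)"

text \<open>Head moves; leaving cells 0..n+1 is a crash (None).\<close>
fun move_head :: "nat \<Rightarrow> nat \<Rightarrow> hmove \<Rightarrow> nat option" where
  "move_head n h HStay = Some h"
| "move_head n h HLeft = (if h = 0 then None else Some (h - 1))"
| "move_head n h HRight = (if h \<ge> n + 1 then None else Some (h + 1))"

text \<open>Detector moves by half a unit; leaving the grid {0,1/2,...,n+1}^2 is a crash (None).\<close>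
fun move_det :: "nat \<Rightarrow> nat \<times> nat \<Rightarrow> dmove \<Rightarrow> (nat \<times> nat) option" where
  "move_det n (J, K) DStay = Some (J, K)"
| "move_det n (J, K) DLeft = (if J = 0 then None else Some (J - 1, K))"
| "move_det n (J, K) DRight = (if J \<ge> 2 * (n + 1) then None else Some (J + 1, K))"
| "move_det n (J, K) DDown = (if K = 0 then None else Some (J, K - 1))"
| "move_det n (J, K) DUp = (if K \<ge> 2 * (n + 1) then None else Some (J, K + 1))"

definition cur_trans :: "'a oia \<Rightarrow> 'a list \<Rightarrow> config \<Rightarrow> nat \<times> hmove \<times> dmove \<times> act" where
  "cur_trans M w c = trans M (cstate c) (tape w (chead c)) (det_output M (length w) c)"

definition step :: "'a oia \<Rightarrow> 'a list \<Rightarrow> config \<Rightarrow> config option" where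
  "step M w c =
     (case cur_trans M w c of (q', hm, dm, a) \<Rightarrow>
       (case move_head (length w) (chead c) hm of
          None \<Rightarrow> None
        | Some h' \<Rightarrow>
          (case move_det (length w) (cdet c) dm of
             None \<Rightarrow> None
           | Some d' \<Rightarrow> Some \<lparr>cstate = q', chead = h', cdet = d',
                  csrc = (csrc c)(chead c := toggle a (csrc c (chead c)))\<rparr>)))"

definition init_conf :: "'a oia \<Rightarrow> 'a list \<Rightarrow> config option" where
  "init_conf M w =
     (if fst (det0 M) \<le> 2 * (length w + 1) \<and> snd (det0 M) \<le> 2 * (length w + 1)
      then Some \<lparr>cstate = start M, chead = 0, cdet = det0 M, csrc = (\<lambda>_. Off)\<rparr>
      else None)"

text \<open>Configuration after t steps (None = crashed).\<close>
primrec run :: "'a oia \<Rightarrow> 'a list \<Rightarrow> nat \<Rightarrow> config option" where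
  "run M w 0 = init_conf M w"
| "run M w (Suc t) = Option.bind (run M w t) (step M w)"

definition halting :: "'a oia \<Rightarrow> config \<Rightarrow> bool" where
  "halting M c \<longleftrightarrow> cstate c \<in> accs M \<union> rejs M"

definition halts_at :: "'a oia \<Rightarrow> 'a list \<Rightarrow> nat \<Rightarrow> bool" where
  "halts_at M w T \<longleftrightarrow>
     (\<exists>c. run M w T = Some c \<and> halting M c) \<and>
     (\<forall>t<T. \<exists>c. run M w t = Some c \<and> \<not> halting M c)"

definition moves_at :: "'a oia \<Rightarrow> 'a list \<Rightarrow> nat \<Rightarrow> nat" where
  "moves_at M w t =
     (case run M w t of None \<Rightarrow> 0
      | Some c \<Rightarrow> (case cur_trans M w c of (q', hm, dm, a) \<Rightarrow>
           (if hm = HStay then 0 else 1) + (if dm = DStay then 0 else 1)))"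

definition toggled :: "'a oia \<Rightarrow> 'a list \<Rightarrow> nat \<Rightarrow> nat \<Rightarrow> nat \<Rightarrow> bool" where
  "toggled M w T m t \<longleftrightarrow> t < T \<and>
     (\<exists>c. run M w t = Some c \<and> chead c = m \<and> snd (snd (snd (cur_trans M w c))) \<noteq> NoAct)"

text \<open>Start times of the non-transient (odd-length) maximal sequences of toggles at
  consecutive time steps on source m, during the first T steps.\<close>
definition nontransient_starts :: "'a oia \<Rightarrow> 'a list \<Rightarrow> nat \<Rightarrow> nat \<Rightarrow> nat set" where
  "nontransient_starts M w T m =
     {s. toggled M w T m s \<and> (s = 0 \<or> \<not> toggled M w T m (s - 1)) \<and>
         odd ((LEAST e. s < e \<and> \<not> toggled M w T m e) - s)}"

text \<open>No crash due to the toggle restriction during the first T steps.\<close>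
definition toggles_ok :: "'a oia \<Rightarrow> 'a list \<Rightarrow> nat \<Rightarrow> bool" where
  "toggles_ok M w T \<longleftrightarrow> (\<forall>m. card (nontransient_starts M w T m) \<le> kbound M)"

definition accepting_conf :: "'a oia \<Rightarrow> 'a list \<Rightarrow> config \<Rightarrow> bool" where
  "accepting_conf M w c \<longleftrightarrow> cstate c \<in> accs M \<and> \<not> det_output M (length w) c"

definition recognizes_in_time :: "'a oia \<Rightarrow> 'a list set \<Rightarrow> (nat \<Rightarrow> real) \<Rightarrow> bool" where
  "recognizes_in_time M L f \<longleftrightarrow>
     (\<forall>w. \<exists>T c. halts_at M w T \<and> run M w T = Some c \<and> toggles_ok M w T \<and>
        (w \<in> L \<longleftrightarrow> accepting_conf M w c) \<and>
        real (\<Sum>t<T. moves_at M w t) \<le> f (length w))"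

inductive balanced :: "paren list \<Rightarrow> bool" where
  bal_nil: "balanced []"
| bal_wrap: "balanced w \<Longrightarrow> balanced (LP # w @ [RP])"
| bal_app: "balanced u \<Longrightarrow> balanced v \<Longrightarrow> balanced (u @ v)"

definition L_bal :: "paren list set" where
  "L_bal = {w. balanced w}"

end

theory Submission
  imports Defs
begin

text \<open>The automaton switches on the single source at cell 0 once and then uses the height of
  the detector as a counter.  Standing at horizontal position 1 and height (d+1)/2, the
  detector sees cell 0 exactly when d \<ge> 1, and a single visible source at positive distance
  gives a nonzero resultant; so the detector output tells whether the current nesting depth d
  is positive.  One left-to-right pass raises the detector on every \<open>(\<close>, lowers it on every
  \<open>)\<close> (rejecting when the depth is already 0) and accepts at the right endmarker iff the
  depth is 0.  The run takes at most n + 2 steps, far below the cubic bound.\<close>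

fun paren_depth :: "paren list \<Rightarrow> nat \<Rightarrow> nat option" where
  "paren_depth [] d = Some d"
| "paren_depth (LP # w) d = paren_depth w (Suc d)"
| "paren_depth (RP # w) d = (if d = 0 then None else paren_depth w (d - 1))"

lemma paren_depth_append:
  "paren_depth (u @ v) d = Option.bind (paren_depth u d) (paren_depth v)"
proof (induction u arbitrary: d)
  case (Cons a u)
  then show ?case by (cases a) auto
qed simp

lemma paren_depth_le: "paren_depth u d = Some d' \<Longrightarrow> d' \<le> d + length u"
proof (induction u arbitrary: d)
  case (Cons a u)
  then show ?case by (cases a) (fastforce split: if_splits)+
qed simp

lemma paren_depth_prefix_not_None:
  "paren_depth (u @ v) d \<noteq> None \<Longrightarrow> paren_depth u d \<noteq> None"
  by (cases "paren_depth u d") (simp_all add: paren_depth_append)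

lemma paren_depth_NoneE:
  assumes "paren_depth w d = None"
  obtains u v where "w = u @ RP # v" and "paren_depth u d = Some 0"
  using assms
proof (induction w arbitrary: d thesis)
  case (Cons a w)
  show ?case
  proof (cases a)
    case LP
    then have "paren_depth w (Suc d) = None" using Cons.prems(2) by simp
    then obtain u v where "w = u @ RP # v" "paren_depth u (Suc d) = Some 0"
      using Cons.IH by blast
    then show ?thesis using Cons.prems(1)[of "LP # u" v] LP by simp
  next
    case RP
    show ?thesis
    proof (cases "d = 0")
      case True
      then show ?thesis using Cons.prems(1)[of "[]"] RP by simp
    next
      case False
      then have "paren_depth w (d - 1) = None" using Cons.prems(2) RP by simp
      then obtain u v where "w = u @ RP # v" "paren_depth u (d - 1) = Some 0"
        using Cons.IH by blast
      then show ?thesis using Cons.prems(1)[of "RP # u" v] RP False by simp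
    qed
  qed
qed simp

lemma balanced_imp_paren_depth: "balanced w \<Longrightarrow> paren_depth w d = Some d"
  by (induction w arbitrary: d rule: balanced.induct) (simp_all add: paren_depth_append)

lemma balanced_LP_RP: "balanced [LP, RP]"
  using balanced.bal_wrap[OF balanced.bal_nil] by simp

lemma balanced_insert_LP_RP:
  "balanced (u @ v) \<Longrightarrow> balanced (u @ LP # RP # v)"
proof (induction "u @ v" arbitrary: u v rule: balanced.induct)
  case bal_nil
  then show ?case using balanced_LP_RP by simp
next
  case (bal_wrap w)
  consider "u = []" | "v = []" | u' v' where "u = LP # u'" "v = v' @ [RP]" "w = u' @ v'"
    using bal_wrap.hyps(3)
    by (cases u; cases v rule: rev_cases) auto
  then show ?case
  proof cases
    case 1
    then show ?thesis
      using balanced.bal_app[OF balanced_LP_RP balanced.bal_wrap[OF bal_wrap.hyps(1)]] bal_wrap.hyps(3)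
      by simp
  next
    case 2
    then show ?thesis
      using balanced.bal_app[OF balanced.bal_wrap[OF bal_wrap.hyps(1)] balanced_LP_RP] bal_wrap.hyps(3)
      by simp
  next
    case 3
    then show ?thesis using balanced.bal_wrap[OF bal_wrap.hyps(2)] by simp
  qed
next
  case (bal_app a b)
  from \<open>a @ b = u @ v\<close> obtain s where "u = a @ s \<and> b = s @ v \<or> a = u @ s \<and> v = s @ b"
    by (auto simp: append_eq_append_conv2)
  then show ?case
    using balanced.bal_app[OF bal_app.hyps(1) bal_app.hyps(4)]
      balanced.bal_app[OF bal_app.hyps(2) bal_app.hyps(3)]
    by auto
qed

lemma paren_depth_imp_balanced:
  "paren_depth w d = Some 0 \<Longrightarrow> balanced (replicate d LP @ w)"
proof (induction w arbitrary: d)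
  case Nil
  then show ?case by (simp add: balanced.bal_nil)
next
  case (Cons a w)
  show ?case
  proof (cases a)
    case LP
    then show ?thesis using Cons.IH[of "Suc d"] Cons.prems
      by (simp add: replicate_app_Cons_same)
  next
    case RP
    with Cons.prems obtain e where d: "d = Suc e" and "paren_depth w e = Some 0"
      by (cases d) auto
    then have "balanced (replicate e LP @ LP # RP # w)"
      using Cons.IH balanced_insert_LP_RP by blast
    then show ?thesis using RP d by (simp add: replicate_append_same[symmetric])
  qed
qed

lemma L_bal_iff_paren_depth: "w \<in> L_bal \<longleftrightarrow> paren_depth w 0 = Some 0"
  using balanced_imp_paren_depth paren_depth_imp_balanced[of w 0] by (auto simp: L_bal_def)

text \<open>States: 0 switches on source 0, 1 scans, 2 accepts, 3 rejects.\<close>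

definition bal_trans :: "nat \<Rightarrow> paren tsym \<Rightarrow> bool \<Rightarrow> nat \<times> hmove \<times> dmove \<times> act" where
  "bal_trans q s b =
    (if q = 0 then (1, HRight, DStay, Toggle0)
     else if q = 1 then
       (case s of
          Sym LP \<Rightarrow> (1, HRight, DUp, NoAct)
        | Sym RP \<Rightarrow> (if b then (1, HRight, DDown, NoAct) else (3, HStay, DStay, NoAct))
        | REnd \<Rightarrow> (if b then (3, HStay, DStay, NoAct) else (2, HStay, DStay, NoAct))
        | LEnd \<Rightarrow> (3, HStay, DStay, NoAct))
     else (q, HStay, DStay, NoAct))"

definition bal_oia :: "paren oia" where
  "bal_oia = \<lparr>states = {0, 1, 2, 3}, start = 0, accs = {2}, rejs = {3}, trans = bal_trans,
     wavelength = 1, amp = 1, det0 = (2, 1), kbound = 1\<rparr>"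

definition scan_conf :: "nat \<Rightarrow> nat \<Rightarrow> nat \<Rightarrow> config" where
  "scan_conf q h d = \<lparr>cstate = q, chead = h, cdet = (2, Suc d), csrc = (\<lambda>_. Off)(0 := On0)\<rparr>"

lemma wf_bal_oia: "wf_oia bal_oia"
  by (auto simp: wf_oia_def bal_oia_def bal_trans_def split: tsym.splits paren.splits)

lemma det_output_scan_conf: "det_output bal_oia n (scan_conf q h d) \<longleftrightarrow> 0 < d"
proof -
  let ?S = "(\<lambda>_. Off)(0 := On0)" and ?r = "srcdist (2, Suc d) 0"
  have "?r = sqrt (1 + (real (Suc d) / 2)\<^sup>2)"
    by (simp add: srcdist_def)
  then have r_pos: "?r > 0"
    by (simp add: add_pos_nonneg)
  have on: "{m \<in> visible n (2, Suc d). ?S m \<noteq> Off} = (if 0 < d then {0} else {})"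
    by (auto simp: visible_def)
  have "resultant bal_oia n (2, Suc d) ?S =
          (if 0 < d then of_real (1 / ?r) * cis (2 * pi * ?r) else 0)"
    unfolding resultant_def on by (simp add: bal_oia_def)
  then show ?thesis
    using r_pos on by (auto simp: det_output_def scan_conf_def)
qed

lemma step_bal_oia_Sym:
  assumes "i < length w" and "d \<le> i" and "paren_depth [w ! i] d = Some e"
  shows "step bal_oia w (scan_conf 1 (Suc i) d) = Some (scan_conf 1 (Suc (Suc i)) e)"
proof -
  have tape: "tape w (Suc i) = Sym (w ! i)"
    using assms(1) by (simp add: tape_def)
  have src: "((\<lambda>_. Off)(0 := On0))(Suc i := Off) = (\<lambda>_. Off)(0 := On0)"
    by auto
  show ?thesis
    using assms tape src det_output_scan_conf[of "length w" 1 "Suc i" d]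
    by (cases "w ! i")
      (auto simp: step_def cur_trans_def bal_oia_def bal_trans_def scan_conf_def split: if_splits)
qed

lemma step_bal_oia_reject:
  assumes "i < length w" and "w ! i = RP"
  shows "step bal_oia w (scan_conf 1 (Suc i) 0) = Some (scan_conf 3 (Suc i) 0)"
  using assms det_output_scan_conf[of "length w" 1 "Suc i" 0]
  by (simp add: step_def cur_trans_def bal_oia_def bal_trans_def scan_conf_def tape_def
      fun_upd_idem)

lemma step_bal_oia_REnd:
  "step bal_oia w (scan_conf 1 (Suc (length w)) d) =
     Some (scan_conf (if d = 0 then 2 else 3) (Suc (length w)) d)"
  using det_output_scan_conf[of "length w" 1 "Suc (length w)" d]
  by (simp add: step_def cur_trans_def bal_oia_def bal_trans_def scan_conf_def tape_def
      fun_upd_idem)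

lemma run_bal_oia_scan:
  "i \<le> length w \<Longrightarrow> paren_depth (take i w) 0 = Some d \<Longrightarrow>
     run bal_oia w (Suc i) = Some (scan_conf 1 (Suc i) d)"
proof (induction i arbitrary: d)
  case 0
  then show ?case
    by (simp add: init_conf_def bal_oia_def step_def cur_trans_def bal_trans_def scan_conf_def)
next
  case (Suc i)
  then have i: "i < length w" by simp
  then have "take (Suc i) w = take i w @ [w ! i]"
    by (simp add: take_Suc_conv_app_nth)
  with Suc.prems(2) obtain e where e: "paren_depth (take i w) 0 = Some e"
    and step: "paren_depth [w ! i] e = Some d"
    by (cases "paren_depth (take i w) 0") (auto simp: paren_depth_append)
  have "e \<le> i"
    using paren_depth_le[OF e] i by simp
  then show ?case
    using Suc.IH[OF _ e] i step_bal_oia_Sym[OF i _ step] by simp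
qed

definition scans_before :: "paren list \<Rightarrow> nat \<Rightarrow> bool" where
  "scans_before w T \<longleftrightarrow>
     (\<forall>t. 0 < t \<and> t < T \<longrightarrow> (\<exists>c. run bal_oia w t = Some c \<and> cstate c = 1))"

lemma scans_before_prefix:
  assumes "i \<le> length w" and "paren_depth (take i w) 0 \<noteq> None"
  shows "scans_before w (Suc (Suc i))"
  unfolding scans_before_def
proof (intro allI impI)
  fix t
  assume "0 < t \<and> t < Suc (Suc i)"
  then obtain j where t: "t = Suc j" and "j \<le> i"
    by (cases t) auto
  then have "take i w = take j w @ drop j (take i w)"
    by (metis append_take_drop_id min.absorb1 take_take)
  then have "paren_depth (take j w) 0 \<noteq> None"
    using assms(2) paren_depth_prefix_not_None by metis
  then obtain d where "paren_depth (take j w) 0 = Some d"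
    by blast
  then show "\<exists>c. run bal_oia w t = Some c \<and> cstate c = 1"
    using run_bal_oia_scan[of j w d] assms(1) \<open>j \<le> i\<close> t by (simp add: scan_conf_def)
qed

lemma bal_oia_outcome:
  obtains T c where "T \<le> length w + 2"
    and "scans_before w T" and "run bal_oia w T = Some c" and "halting bal_oia c"
    and "w \<in> L_bal \<longleftrightarrow> accepting_conf bal_oia w c"
proof (cases "paren_depth w 0")
  case (Some d)
  let ?c = "scan_conf (if d = 0 then 2 else 3) (Suc (length w)) d"
  have run: "run bal_oia w (Suc (Suc (length w))) = Some ?c"
    using run_bal_oia_scan[of "length w" w d] Some step_bal_oia_REnd by simp
  have scanning: "scans_before w (Suc (Suc (length w)))"
    using scans_before_prefix[of "length w" w] Some by simp
  have halt: "halting bal_oia ?c"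
    by (simp add: halting_def bal_oia_def scan_conf_def)
  have decides: "w \<in> L_bal \<longleftrightarrow> accepting_conf bal_oia w ?c"
    using Some det_output_scan_conf
    by (auto simp: L_bal_iff_paren_depth accepting_conf_def bal_oia_def scan_conf_def)
  show thesis
    by (rule that[OF _ scanning run halt decides]) simp
next
  case None
  then obtain u v where w: "w = u @ RP # v" and u: "paren_depth u 0 = Some 0"
    by (rule paren_depth_NoneE)
  let ?i = "length u" and ?c = "scan_conf 3 (Suc (length u)) 0"
  have run: "run bal_oia w (Suc (Suc ?i)) = Some ?c"
    using run_bal_oia_scan[of ?i w 0] step_bal_oia_reject[of ?i w] w u by simp
  have scanning: "scans_before w (Suc (Suc ?i))"
    using scans_before_prefix[of ?i w] w u by simp
  have halt: "halting bal_oia ?c"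
    by (simp add: halting_def bal_oia_def scan_conf_def)
  have "w \<notin> L_bal"
    using None by (simp add: L_bal_iff_paren_depth)
  moreover have "\<not> accepting_conf bal_oia w ?c"
    by (simp add: accepting_conf_def bal_oia_def scan_conf_def)
  ultimately show thesis
    by (intro that[OF _ scanning run halt]) (simp_all add: w)
qed

lemma bal_trans_scanning_NoAct: "snd (snd (snd (bal_trans 1 s b))) = NoAct"
  by (simp add: bal_trans_def split: tsym.split paren.split)

lemma halts_at_bal_oia:
  assumes "scans_before w T" and "run bal_oia w T = Some c" and "halting bal_oia c"
  shows "halts_at bal_oia w T"
proof -
  have "\<exists>c. run bal_oia w t = Some c \<and> \<not> halting bal_oia c" if "t < T" for t
  proof (cases t)
    case 0
    then show ?thesis by (simp add: init_conf_def halting_def bal_oia_def)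
  next
    case (Suc j)
    then show ?thesis
      using assms(1) that by (auto simp: scans_before_def halting_def bal_oia_def)
  qed
  then show ?thesis
    using assms(2,3) by (auto simp: halts_at_def)
qed

lemma toggles_ok_bal_oia:
  assumes "scans_before w T"
  shows "toggles_ok bal_oia w T"
proof -
  have starts: "nontransient_starts bal_oia w T m \<subseteq> {0}" for m
  proof
    fix s
    assume "s \<in> nontransient_starts bal_oia w T m"
    then have "toggled bal_oia w T m s"
      unfolding nontransient_starts_def by blast
    then obtain c where "s < T" and run: "run bal_oia w s = Some c"
      and act: "snd (snd (snd (cur_trans bal_oia w c))) \<noteq> NoAct"
      unfolding toggled_def by blast
    have "cstate c \<noteq> 1"
    proof
      assume "cstate c = 1"
      then show False
        using act bal_trans_scanning_NoAct by (simp add: cur_trans_def bal_oia_def)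
    qed
    moreover have "cstate c = 1" if "0 < s"
      using assms \<open>s < T\<close> run that unfolding scans_before_def by fastforce
    ultimately show "s \<in> {0}"
      by auto
  qed
  have "card (nontransient_starts bal_oia w T m) \<le> card {0 :: nat}" for m
    using starts by (intro card_mono) simp_all
  moreover have "kbound bal_oia = 1"
    by (simp add: bal_oia_def)
  ultimately show ?thesis
    unfolding toggles_ok_def by simp
qed

lemma sum_moves_at_le: "(\<Sum>t<T. moves_at M w t) \<le> 2 * T"
proof -
  have "moves_at M w t \<le> 2" for t
    by (auto simp: moves_at_def split: option.splits prod.splits)
  then show ?thesis
    using sum_bounded_above[of "{..<T}" "moves_at M w" 2] by (simp add: mult.commute)
qed

theorem theorem5:
  shows "\<exists>(M :: paren oia) (C :: real). wf_oia M \<and>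
           recognizes_in_time M L_bal (\<lambda>n. C * (real n + 1) ^ 3)"
proof (intro exI conjI)
  show "wf_oia bal_oia"
    by (rule wf_bal_oia)
  show "recognizes_in_time bal_oia L_bal (\<lambda>n. 4 * (real n + 1) ^ 3)"
    unfolding recognizes_in_time_def
  proof
    fix w :: "paren list"
    obtain T c where T: "T \<le> length w + 2"
      and scanning: "scans_before w T" and run: "run bal_oia w T = Some c"
      and "halting bal_oia c"
      and decides: "w \<in> L_bal \<longleftrightarrow> accepting_conf bal_oia w c"
      using bal_oia_outcome[of w] by blast
    have "real (\<Sum>t<T. moves_at bal_oia w t) \<le> real (2 * (length w + 2))"
      using T by (intro of_nat_mono le_trans[OF sum_moves_at_le]) simp
    also have "\<dots> \<le> 4 * (real (length w) + 1) ^ 3"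
      using self_le_power[of "real (length w) + 1" 3] by simp
    finally show "\<exists>T c. halts_at bal_oia w T \<and> run bal_oia w T = Some c \<and>
        toggles_ok bal_oia w T \<and> (w \<in> L_bal \<longleftrightarrow> accepting_conf bal_oia w c) \<and>
        real (\<Sum>t<T. moves_at bal_oia w t) \<le> 4 * (real (length w) + 1) ^ 3"
      using halts_at_bal_oia[OF scanning run \<open>halting bal_oia c\<close>]
        toggles_ok_bal_oia[OF scanning] run decides by blast
  qed
qed

end
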